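(* Let $A$ be a finite nonempty set of actions and $\boldsymbol{v}^0,\boldsymbol{v}^1,\dots\in\mathbb{R}^{|A|}$ an arbitrary sequence of value vectors. Let $\boldsymbol{s}^t$ denote either the regret-matching stored values $\boldsymbol{r}^t$ or the regret-matching$^+$ stored values $\boldsymbol{q}^t$, and $\boldsymbol{\sigma}^t$ the associated policy. Then for every $t$ such that $s^t_a>0$ for some $a\in A$, there exists $b\in A$ with $s^{t+1}_b>0$.
   Context: For $x\in\mathbb{R}$, $x^+:=\max(x,0)$, applied componentwise to vectors. Define $\boldsymbol{\sigma}_{\mathrm{rm}}(\boldsymbol{x}):=\boldsymbol{x}^+/(\boldsymbol{1}\cdot\boldsymbol{x}^+)$ if some $x_a>0$, and $\boldsymbol{1}/|A|$ otherwise. Regret-matching: $\boldsymbol{r}^0=\boldsymbol{0}$, $\boldsymbol{\sigma}^t=\boldsymbol{\sigma}_{\mathrm{rm}}(\boldsymbol{r}^t)$, $\boldsymbol{r}^{t+1}=\boldsymbol{r}^t+\boldsymbol{v}^t-(\boldsymbol{\sigma}^t\cdot\boldsymbol{v}^t)\boldsymbol{1}$. Regret-matching$^+$: $\boldsymbol{q}^0=\boldsymbol{0}$, $\boldsymbol{\sigma}^t=\boldsymbol{\sigma}_{\mathrm{rm}}(\boldsymbol{q}^t)$, $\boldsymbol{q}^{t+1}=\bigl(\boldsymbol{q}^t+\boldsymbol{v}^t-(\boldsymbol{\sigma}^t\cdot\boldsymbol{v}^t)\boldsymbol{1}\bigr)^+$. *)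

theory Defs
  imports Main "HOL.Real"
begin

text \<open>Actions: the elements of a finite (nonempty) type 'a.  Vectors in R^|A| are
functions 'a \<Rightarrow> real.  x^+ is componentwise max(x,0).\<close>

definition pos_part :: "('a \<Rightarrow> real) \<Rightarrow> 'a \<Rightarrow> real" where
  "pos_part x = (\<lambda>a. max (x a) 0)"

definition sigma_rm :: "('a::finite \<Rightarrow> real) \<Rightarrow> 'a \<Rightarrow> real" where
  "sigma_rm x = (if \<exists>a. x a > 0
      then (\<lambda>a. pos_part x a / (\<Sum>b\<in>UNIV. pos_part x b))
      else (\<lambda>a. 1 / real (card (UNIV :: 'a set))))"

definition inst_regret :: "('a::finite \<Rightarrow> real) \<Rightarrow> ('a \<Rightarrow> real) \<Rightarrow> 'a \<Rightarrow> real" where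
  "inst_regret s v = (\<lambda>a. v a - (\<Sum>b\<in>UNIV. sigma_rm s b * v b))"

primrec rm_r :: "(nat \<Rightarrow> 'a::finite \<Rightarrow> real) \<Rightarrow> nat \<Rightarrow> 'a \<Rightarrow> real" where
  "rm_r v 0 = (\<lambda>a. 0)"
| "rm_r v (Suc t) = (\<lambda>a. rm_r v t a + inst_regret (rm_r v t) (v t) a)"

primrec rmp_q :: "(nat \<Rightarrow> 'a::finite \<Rightarrow> real) \<Rightarrow> nat \<Rightarrow> 'a \<Rightarrow> real" where
  "rmp_q v 0 = (\<lambda>a. 0)"
| "rmp_q v (Suc t) = pos_part (\<lambda>a. rmp_q v t a + inst_regret (rmp_q v t) (v t) a)"

end

theory Submission
  imports Defs
begin

(* Write sigma = sigma_rm x. Since sigma is a probability vector, the instantaneous regret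
   v - (sigma . v) 1 is orthogonal to sigma, so
   sigma . (x + v - (sigma . v) 1) = sigma . x = |x^+|_2^2 / |x^+|_1,
   which is positive as soon as x has a positive entry. As sigma >= 0, the updated vector then
   has a positive entry, and that entry survives the positive part taken by regret-matching+. *)

lemma pos_part_nonneg: "pos_part x a \<ge> 0"
  by (simp add: pos_part_def)

lemma pos_part_pos_iff: "pos_part x a > 0 \<longleftrightarrow> x a > 0"
  by (simp add: pos_part_def less_max_iff_disj)

lemma sum_pos_part_pos:
  fixes x :: "'a::finite \<Rightarrow> real"
  assumes "x a > 0"
  shows "(\<Sum>b\<in>UNIV. pos_part x b) > 0"
  by (rule sum_pos2[of UNIV a]) (use assms in \<open>auto simp: pos_part_nonneg pos_part_pos_iff\<close>)

lemma sigma_rm_nonneg: "sigma_rm x a \<ge> 0"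
  by (simp add: sigma_rm_def pos_part_nonneg sum_nonneg)

lemma sum_sigma_rm: "(\<Sum>b\<in>UNIV. sigma_rm x b) = 1"
proof (cases "\<exists>a. x a > 0")
  case True
  then obtain a where "x a > 0" by blast
  then have "(\<Sum>b\<in>UNIV. pos_part x b) \<noteq> 0"
    using sum_pos_part_pos by fastforce
  with True show ?thesis
    by (simp add: sigma_rm_def flip: sum_divide_distrib)
next
  case False
  then show ?thesis by (simp add: sigma_rm_def)
qed

lemma sum_sigma_rm_mult_inst_regret:
  "(\<Sum>b\<in>UNIV. sigma_rm x b * inst_regret x w b) = 0"
  by (simp add: inst_regret_def right_diff_distrib sum_subtractf
      flip: sum_distrib_right add: sum_sigma_rm)

lemma sum_sigma_rm_mult_pos:
  fixes x :: "'a::finite \<Rightarrow> real"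
  assumes "x a > 0"
  shows "(\<Sum>b\<in>UNIV. sigma_rm x b * x b) > 0"
proof -
  let ?S = "\<Sum>b\<in>UNIV. pos_part x b"
  have "?S > 0" using assms by (rule sum_pos_part_pos)
  have "sigma_rm x b * x b = pos_part x b * pos_part x b / ?S" for b
    using assms by (auto simp: sigma_rm_def pos_part_def max_def)
  moreover have "(\<Sum>b\<in>UNIV. pos_part x b * pos_part x b) > 0"
    by (rule sum_pos2[of UNIV a]) (use assms in \<open>auto simp: pos_part_pos_iff\<close>)
  ultimately show ?thesis
    using \<open>?S > 0\<close> by (simp flip: sum_divide_distrib)
qed

lemma ex_pos_regret_update:
  fixes x w :: "'a::finite \<Rightarrow> real"
  assumes "x a > 0"
  shows "\<exists>b. x b + inst_regret x w b > 0"
proof -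
  have "(\<Sum>b\<in>UNIV. sigma_rm x b * (x b + inst_regret x w b))
      = (\<Sum>b\<in>UNIV. sigma_rm x b * x b)"
    by (simp add: distrib_left sum.distrib sum_sigma_rm_mult_inst_regret)
  also have "\<dots> > 0"
    using assms by (rule sum_sigma_rm_mult_pos)
  finally obtain b where "sigma_rm x b * (x b + inst_regret x w b) > 0"
    by (meson not_le sum_nonpos)
  then show ?thesis
    using sigma_rm_nonneg[of x b] by (auto simp: zero_less_mult_iff)
qed

theorem lemma1:
  fixes v :: "nat \<Rightarrow> 'a::finite \<Rightarrow> real" and t :: nat
  shows "((\<exists>a. rm_r v t a > 0) \<longrightarrow> (\<exists>b. rm_r v (Suc t) b > 0))
       \<and> ((\<exists>a. rmp_q v t a > 0) \<longrightarrow> (\<exists>b. rmp_q v (Suc t) b > 0))"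
proof (intro conjI impI)
  assume "\<exists>a. rm_r v t a > 0"
  then show "\<exists>b. rm_r v (Suc t) b > 0"
    using ex_pos_regret_update by fastforce
next
  assume "\<exists>a. rmp_q v t a > 0"
  then show "\<exists>b. rmp_q v (Suc t) b > 0"
    using ex_pos_regret_update by (fastforce simp: pos_part_pos_iff)
qed

end
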